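(* Let $n\ge 6$ be even and consider the $[\![n,n-2,2]\!]$ code. Let $U$ be the product of the gates obtained from every tuple $(a,b,c)\in\{2,n\}\times\{3,n\}\times\{4,n\}$, namely $\mathrm{CCZ}_{a,b,c}$ when $a,b,c$ are distinct, $\mathrm{CZ}$ on the two distinct qubits when exactly two are distinct, and $Z_n$ for $(n,n,n)$; explicitly $U = Z_n\,\mathrm{CZ}_{2,n}\mathrm{CZ}_{3,n}\mathrm{CZ}_{4,n}\,\mathrm{CCZ}_{2,3,4}\mathrm{CCZ}_{2,3,n}\mathrm{CCZ}_{2,n,4}\mathrm{CCZ}_{n,3,4}$. Then $U$ preserves the code space and acts on it as the logical $\mathrm{CCZ}$ gate on encoded qubits $1,2,3$: $|\bar x\rangle\mapsto(-1)^{x_1x_2x_3}|\bar x\rangle$.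
   Context: For even $n$, the $[\![n,n-2,2]\!]$ code is the stabilizer code on $n$ qubits with stabilizer generators $X^{\otimes n}$ and $Z^{\otimes n}$, with logical operators $\bar X_j = X_1X_{j+1}$ and $\bar Z_j = Z_{j+1}Z_n$ for $j=1,\dots,n-2$. $|\bar x\rangle$ is the code state with $\bar Z_j|\bar x\rangle = (-1)^{x_j}|\bar x\rangle$. $\mathrm{CZ}=\mathbb 1-2|11\rangle\langle 11|$, $\mathrm{CCZ} = \mathbb 1 - 2|111\rangle\langle111|$. *)

theory Defs
  imports Complex_Main
begin

text \<open>A computational basis string is a
 function b :: nat => bool; a state is psi :: (nat => bool) => complex that is
 supported on strings vanishing outside {1..n} (so the state space is C^(2^n)).\<close>

type_synonym state = "(nat \<Rightarrow> bool) \<Rightarrow> complex"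

definition valid_state :: "nat \<Rightarrow> state \<Rightarrow> bool" where
  "valid_state n \<psi> \<longleftrightarrow> (\<forall>b. (\<exists>i. b i \<and> (i < 1 \<or> n < i)) \<longrightarrow> \<psi> b = 0)"

definition sgn_bit :: "bool \<Rightarrow> complex" where
  "sgn_bit c = (if c then -1 else 1)"

definition Xop :: "nat \<Rightarrow> state \<Rightarrow> state" where
  "Xop i \<psi> = (\<lambda>b. \<psi> (b(i := \<not> b i)))"

definition Zop :: "nat \<Rightarrow> state \<Rightarrow> state" where
  "Zop i \<psi> = (\<lambda>b. sgn_bit (b i) * \<psi> b)"

definition Xall :: "nat \<Rightarrow> state \<Rightarrow> state" where
  "Xall n \<psi> = (\<lambda>b. \<psi> (\<lambda>i. if 1 \<le> i \<and> i \<le> n then \<not> b i else b i))"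

definition Zall :: "nat \<Rightarrow> state \<Rightarrow> state" where
  "Zall n \<psi> = (\<lambda>b. (-1) ^ card {i \<in> {1..n}. b i} * \<psi> b)"

definition CZop :: "nat \<Rightarrow> nat \<Rightarrow> state \<Rightarrow> state" where
  "CZop i j \<psi> = (\<lambda>b. sgn_bit (b i \<and> b j) * \<psi> b)"

definition CCZop :: "nat \<Rightarrow> nat \<Rightarrow> nat \<Rightarrow> state \<Rightarrow> state" where
  "CCZop i j k \<psi> = (\<lambda>b. sgn_bit (b i \<and> b j \<and> b k) * \<psi> b)"

definition in_code :: "nat \<Rightarrow> state \<Rightarrow> bool" where
  "in_code n \<psi> \<longleftrightarrow> valid_state n \<psi> \<and> Xall n \<psi> = \<psi> \<and> Zall n \<psi> = \<psi>"

definition Xbar :: "nat \<Rightarrow> nat \<Rightarrow> state \<Rightarrow> state" where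
  "Xbar n j = Xop 1 \<circ> Xop (j + 1)"

definition Zbar :: "nat \<Rightarrow> nat \<Rightarrow> state \<Rightarrow> state" where
  "Zbar n j = Zop (j + 1) \<circ> Zop n"

text \<open>psi is (a representative of) the code state |x-bar>: in the code space and
 Z-bar_j psi = (-1)^(x_j) psi for j = 1..n-2.\<close>
definition is_logical_state :: "nat \<Rightarrow> (nat \<Rightarrow> bool) \<Rightarrow> state \<Rightarrow> bool" where
  "is_logical_state n x \<psi> \<longleftrightarrow> in_code n \<psi> \<and>
     (\<forall>j \<in> {1..n-2}. Zbar n j \<psi> = (\<lambda>b. sgn_bit (x j) * \<psi> b))"

definition Ugate :: "nat \<Rightarrow> state \<Rightarrow> state" where
  "Ugate n = Zop n \<circ> CZop 2 n \<circ> CZop 3 n \<circ> CZop 4 n \<circ> CCZop 2 3 4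
             \<circ> CCZop 2 3 n \<circ> CCZop 2 n 4 \<circ> CCZop n 3 4"

end

theory Submission
  imports Defs
begin

text \<open>Since qubit n is none of 2, 3, 4, the eight gates multiply to the diagonal phase
  (-1)^((b2 + bn)(b3 + bn)(b4 + bn)) (sums mod 2). This phase depends only on differences
  of bits, so it is invariant under the global flip X^n and hence preserves the code space;
  and on the support of a logical state the difference b(j+1) + bn is exactly the logical
  bit x_j, since the state is an eigenvector of Z_(j+1) Z_n.\<close>

lemma sgn_bit_mult: "sgn_bit a * sgn_bit c = sgn_bit (a \<noteq> c)"
  by (simp add: sgn_bit_def)

lemma Ugate_eq_phase:
  assumes "n \<notin> {2, 3, 4}"
  shows "Ugate n \<psi> = (\<lambda>b. sgn_bit ((b 2 \<noteq> b n) \<and> (b 3 \<noteq> b n) \<and> (b 4 \<noteq> b n)) * \<psi> b)"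
proof
  fix b
  show "Ugate n \<psi> b = sgn_bit ((b 2 \<noteq> b n) \<and> (b 3 \<noteq> b n) \<and> (b 4 \<noteq> b n)) * \<psi> b"
    using assms unfolding Ugate_def Zop_def CZop_def CCZop_def
    by (cases "b 2"; cases "b 3"; cases "b 4"; cases "b n"; simp add: sgn_bit_def)
qed

lemma in_code_diagonal:
  assumes code: "in_code n \<psi>"
    and flip_invariant: "\<And>b. f (\<lambda>i. if 1 \<le> i \<and> i \<le> n then \<not> b i else b i) = f b"
  shows "in_code n (\<lambda>b. f b * \<psi> b)"
proof -
  from code have valid: "valid_state n \<psi>" and X: "Xall n \<psi> = \<psi>" and Z: "Zall n \<psi> = \<psi>"
    by (auto simp: in_code_def)
  from X have "Xall n (\<lambda>b. f b * \<psi> b) = (\<lambda>b. f b * \<psi> b)"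
    unfolding Xall_def flip_invariant by (metis (no_types))
  moreover from Z have "Zall n (\<lambda>b. f b * \<psi> b) = (\<lambda>b. f b * \<psi> b)"
    by (simp add: Zall_def fun_eq_iff mult.left_commute)
  ultimately show ?thesis
    using valid by (simp add: in_code_def valid_state_def)
qed

lemma Zbar_apply: "Zbar n j \<psi> = (\<lambda>b. sgn_bit (b (j + 1) \<noteq> b n) * \<psi> b)"
  by (simp add: Zbar_def Zop_def fun_eq_iff mult.assoc[symmetric] sgn_bit_mult)

lemma logical_state_bit_difference:
  assumes "is_logical_state n x \<psi>" "j \<in> {1..n-2}" "\<psi> b \<noteq> 0"
  shows "(b (j + 1) \<noteq> b n) = x j"
proof -
  have "sgn_bit (b (j + 1) \<noteq> b n) * \<psi> b = sgn_bit (x j) * \<psi> b"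
    using assms(1,2) unfolding is_logical_state_def Zbar_apply by (metis (no_types, lifting))
  with assms(3) show ?thesis
    by (auto simp: sgn_bit_def split: if_splits)
qed

theorem mainTheorem6:
  fixes n :: nat
  assumes "even n" and "6 \<le> n"
  shows "(\<forall>\<psi>. in_code n \<psi> \<longrightarrow> in_code n (Ugate n \<psi>)) \<and>
         (\<forall>x \<psi>. is_logical_state n x \<psi> \<longrightarrow>
            Ugate n \<psi> = (\<lambda>b. sgn_bit (x 1 \<and> x 2 \<and> x 3) * \<psi> b))"
proof -
  have n: "n \<notin> {2, 3, 4}" using assms(2) by auto
  show ?thesis
  proof (intro conjI allI impI)
    fix \<psi> assume "in_code n \<psi>"
    then show "in_code n (Ugate n \<psi>)"
      unfolding Ugate_eq_phase[OF n] using assms(2)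
      by (intro in_code_diagonal) auto
  next
    fix x \<psi> assume logical: "is_logical_state n x \<psi>"
    have "Ugate n \<psi> b = sgn_bit (x 1 \<and> x 2 \<and> x 3) * \<psi> b" for b
    proof (cases "\<psi> b = 0")
      case False
      have "1 \<in> {1..n-2}" "2 \<in> {1..n-2}" "3 \<in> {1..n-2}" using assms(2) by auto
      then have "(b 2 \<noteq> b n) = x 1" "(b 3 \<noteq> b n) = x 2" "(b 4 \<noteq> b n) = x 3"
        using logical_state_bit_difference[OF logical _ False] by (fastforce simp: numeral_eq_Suc)+
      then show ?thesis by (simp add: Ugate_eq_phase[OF n])
    qed (simp add: Ugate_eq_phase[OF n])
    then show "Ugate n \<psi> = (\<lambda>b. sgn_bit (x 1 \<and> x 2 \<and> x 3) * \<psi> b)" ..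
  qed
qed

end
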